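(* Let $S,T$ be left inverse semi-braces, $\sigma:T\to\mathrm{Aut}(S)$ a homomorphism from $(T,\cdot)$ into the automorphism group of the left inverse semi-brace $S$ (write ${}^ua=\sigma(u)(a)$), and $\delta:S\to\mathrm{End}(T)$ an anti-homomorphism from $(S,+)$ into the endomorphism semigroup of $(T,+)$ (write $u^a=\delta(a)(u)$) satisfying $(uv)^{\lambda_a({}^ub)}+u((u^{-1})^b+w)=u(v^b+w)$ for all $a,b\in S$, $u,v,w\in T$. Let $B$ be the double semidirect product, i.e. $S\times T$ with $(a,u)+(b,v)=(a+b,u^b+v)$ and $(a,u)(b,v)=(a\,{}^ub,uv)$. Then the map $r_B$ associated to $B$ is given by $$r_B((a,u),(b,v))=\left(\left(\lambda_a({}^ub),\,u\,\Omega^b_{u,v}\right),\ \left({}^{(\Omega^b_{u,v})^{-1}u^{-1}}\rho_{{}^ub}(a),\ (\Omega^b_{u,v})^{-1}v\right)\right)$$ for all $(a,u),(b,v)\in S\times T$, where $\Omega^b_{u,v}=(u^{-1})^b+v$.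
   Context: An inverse semigroup is a semigroup $(S,\cdot)$ in which for each $a$ there is a unique $a^{-1}$ with $aa^{-1}a=a$, $a^{-1}aa^{-1}=a^{-1}$. A left inverse semi-brace is a triple $(S,+,\cdot)$ with $(S,+)$ a semigroup, $(S,\cdot)$ an inverse semigroup and $a(b+c)=ab+a(a^{-1}+c)$ for all $a,b,c$. Set $\lambda_a(b)=a(a^{-1}+b)$, $\rho_b(a)=(a^{-1}+b)^{-1}b$; the map associated to a left inverse semi-brace $X$ is $r_X(x,y)=(\lambda_x(y),\rho_y(x))$. An automorphism of the left inverse semi-brace $S$ is a bijection preserving both operations. That $\delta$ is an anti-homomorphism from $(S,+)$ means $u^{a+b}=(u^a)^b$. Under these hypotheses $B$ is a left inverse semi-brace. *)

theory Defs
  imports Main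
begin

definition semigroup_op :: "('a \<Rightarrow> 'a \<Rightarrow> 'a) \<Rightarrow> bool" where
  "semigroup_op f \<longleftrightarrow> (\<forall>a b c. f (f a b) c = f a (f b c))"

definition inverse_semigroup :: "('a \<Rightarrow> 'a \<Rightarrow> 'a) \<Rightarrow> bool" where
  "inverse_semigroup m \<longleftrightarrow> semigroup_op m \<and>
     (\<forall>a. \<exists>!x. m (m a x) a = a \<and> m (m x a) x = x)"

definition inv_of :: "('a \<Rightarrow> 'a \<Rightarrow> 'a) \<Rightarrow> 'a \<Rightarrow> 'a" where
  "inv_of m a = (THE x. m (m a x) a = a \<and> m (m x a) x = x)"

definition left_inverse_semi_brace :: "('a \<Rightarrow> 'a \<Rightarrow> 'a) \<Rightarrow> ('a \<Rightarrow> 'a \<Rightarrow> 'a) \<Rightarrow> bool" where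
  "left_inverse_semi_brace add m \<longleftrightarrow> semigroup_op add \<and> inverse_semigroup m \<and>
     (\<forall>a b c. m a (add b c) = add (m a b) (m a (add (inv_of m a) c)))"

definition lam :: "('a \<Rightarrow> 'a \<Rightarrow> 'a) \<Rightarrow> ('a \<Rightarrow> 'a \<Rightarrow> 'a) \<Rightarrow> 'a \<Rightarrow> 'a \<Rightarrow> 'a" where
  "lam add m a b = m a (add (inv_of m a) b)"

definition rho :: "('a \<Rightarrow> 'a \<Rightarrow> 'a) \<Rightarrow> ('a \<Rightarrow> 'a \<Rightarrow> 'a) \<Rightarrow> 'a \<Rightarrow> 'a \<Rightarrow> 'a" where
  "rho add m b a = m (inv_of m (add (inv_of m a) b)) b"

definition r_map :: "('a \<Rightarrow> 'a \<Rightarrow> 'a) \<Rightarrow> ('a \<Rightarrow> 'a \<Rightarrow> 'a) \<Rightarrow> 'a \<Rightarrow> 'a \<Rightarrow> 'a \<times> 'a" where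
  "r_map add m x y = (lam add m x y, rho add m y x)"

definition semi_brace_aut :: "('a \<Rightarrow> 'a \<Rightarrow> 'a) \<Rightarrow> ('a \<Rightarrow> 'a \<Rightarrow> 'a) \<Rightarrow> ('a \<Rightarrow> 'a) \<Rightarrow> bool" where
  "semi_brace_aut add m f \<longleftrightarrow> bij f \<and> (\<forall>a b. f (add a b) = add (f a) (f b)) \<and>
     (\<forall>a b. f (m a b) = m (f a) (f b))"

definition dsp_add :: "('a \<Rightarrow> 'a \<Rightarrow> 'a) \<Rightarrow> ('b \<Rightarrow> 'b \<Rightarrow> 'b) \<Rightarrow> ('a \<Rightarrow> 'b \<Rightarrow> 'b)
    \<Rightarrow> 'a \<times> 'b \<Rightarrow> 'a \<times> 'b \<Rightarrow> 'a \<times> 'b" where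
  "dsp_add addS addT \<delta> x y = (addS (fst x) (fst y), addT (\<delta> (fst y) (snd x)) (snd y))"

definition dsp_mult :: "('a \<Rightarrow> 'a \<Rightarrow> 'a) \<Rightarrow> ('b \<Rightarrow> 'b \<Rightarrow> 'b) \<Rightarrow> ('b \<Rightarrow> 'a \<Rightarrow> 'a)
    \<Rightarrow> 'a \<times> 'b \<Rightarrow> 'a \<times> 'b \<Rightarrow> 'a \<times> 'b" where
  "dsp_mult mS mT \<sigma> x y = (mS (fst x) (\<sigma> (snd x) (fst y)), mT (snd x) (snd y))"

end

theory Submission
  imports Defs
begin

text \<open>Only the multiplicative structure of the double semidirect product enters: since each
  \<open>\<sigma> u\<close> is an injective multiplicative map and \<open>\<sigma>\<close> is an action, \<open>(S \<times> T, \<cdot>)\<close> is an inverse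
  semigroup in which \<open>(a, u)\<inverse> = (\<sigma> u\<inverse> a\<inverse>, u\<inverse>)\<close>. Then
  \<open>(a, u)\<inverse> + (b, v) = (\<sigma> u\<inverse> a\<inverse> + b, \<Omega>)\<close>, and substituting into the definitions of
  \<open>\<lambda>\<close> and \<open>\<rho>\<close>, using that \<open>\<sigma> u\<close> is additive, gives both components of \<open>r\<^sub>B\<close>.\<close>

lemma inverse_semigroup_assoc:
  assumes "inverse_semigroup m"
  shows "m (m x y) z = m x (m y z)"
  using assms unfolding inverse_semigroup_def semigroup_op_def by blast

lemma inv_of_regular:
  assumes "inverse_semigroup m"
  shows "m (m a (inv_of m a)) a = a" and "m (m (inv_of m a) a) (inv_of m a) = inv_of m a"
proof -
  from assms have "\<exists>!x. m (m a x) a = a \<and> m (m x a) x = x"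
    unfolding inverse_semigroup_def by blast
  then have "m (m a (inv_of m a)) a = a \<and> m (m (inv_of m a) a) (inv_of m a) = inv_of m a"
    unfolding inv_of_def by (rule theI')
  then show "m (m a (inv_of m a)) a = a" and "m (m (inv_of m a) a) (inv_of m a) = inv_of m a"
    by blast+
qed

lemma inv_of_eqI:
  assumes "inverse_semigroup m" "m (m a x) a = a" "m (m x a) x = x"
  shows "inv_of m a = x"
proof -
  from assms(1) have "\<exists>!x. m (m a x) a = a \<and> m (m x a) x = x"
    unfolding inverse_semigroup_def by blast
  then show ?thesis
    unfolding inv_of_def by (rule the1_equality) (simp add: assms(2,3))
qed

lemma inv_of_inv_of:
  assumes "inverse_semigroup m"
  shows "inv_of m (inv_of m a) = a"
  using assms by (rule inv_of_eqI) (simp_all add: inv_of_regular[OF assms])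

lemma mult_hom_inv_of:
  assumes "inverse_semigroup m" and hom: "\<And>x y. f (m x y) = m (f x) (f y)"
  shows "f (inv_of m a) = inv_of m (f a)"
proof -
  have "m (m (f a) (f (inv_of m a))) (f a) = f a"
    using arg_cong[OF inv_of_regular(1)[OF assms(1)], of f] by (simp add: hom)
  moreover have "m (m (f (inv_of m a)) (f a)) (f (inv_of m a)) = f (inv_of m a)"
    using arg_cong[OF inv_of_regular(2)[OF assms(1)], of f] by (simp add: hom)
  ultimately show ?thesis
    by (simp add: inv_of_eqI[OF assms(1)])
qed

lemma inj_idempotent_eq_id:
  assumes "inj f" "\<And>x. f (f x) = f x"
  shows "f x = x"
  using assms by (simp add: inj_eq)

locale inverse_semigroup_action =
  fixes mS :: "'a \<Rightarrow> 'a \<Rightarrow> 'a" and mT :: "'b \<Rightarrow> 'b \<Rightarrow> 'b" and \<sigma> :: "'b \<Rightarrow> 'a \<Rightarrow> 'a"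
  assumes inverse_S: "inverse_semigroup mS"
    and inverse_T: "inverse_semigroup mT"
    and act_mult: "\<sigma> u (mS x y) = mS (\<sigma> u x) (\<sigma> u y)"
    and act_inj: "inj (\<sigma> u)"
    and act_comp: "\<sigma> (mT u v) x = \<sigma> u (\<sigma> v x)"
begin

lemma act_idempotent: "\<sigma> (mT u (inv_of mT u)) x = x"
proof (rule inj_idempotent_eq_id[OF act_inj])
  let ?e = "mT u (inv_of mT u)"
  have "mT ?e ?e = mT (mT ?e u) (inv_of mT u)"
    by (simp only: inverse_semigroup_assoc[OF inverse_T])
  also have "\<dots> = ?e"
    by (simp only: inv_of_regular(1)[OF inverse_T])
  finally show "\<sigma> ?e (\<sigma> ?e y) = \<sigma> ?e y" for y
    by (metis act_comp)
qed

lemma act_act_inv: "\<sigma> u (\<sigma> (inv_of mT u) x) = x"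
  using act_idempotent[of u x] by (simp only: act_comp)

lemma act_inv_act: "\<sigma> (inv_of mT u) (\<sigma> u x) = x"
  using act_act_inv[of "inv_of mT u" x] by (simp only: inv_of_inv_of[OF inverse_T])

lemma act_inv_of: "\<sigma> u (inv_of mS x) = inv_of mS (\<sigma> u x)"
  by (rule mult_hom_inv_of[of mS "\<sigma> u", OF inverse_S act_mult])

lemma dsp_mult_assoc:
  "dsp_mult mS mT \<sigma> (dsp_mult mS mT \<sigma> x y) z = dsp_mult mS mT \<sigma> x (dsp_mult mS mT \<sigma> y z)"
  by (simp add: dsp_mult_def act_mult act_comp
      inverse_semigroup_assoc[OF inverse_S] inverse_semigroup_assoc[OF inverse_T])

lemma dsp_mult_regular:
  fixes a :: 'a and u :: 'b
  defines "x' \<equiv> (\<sigma> (inv_of mT u) (inv_of mS a), inv_of mT u)"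
  shows "dsp_mult mS mT \<sigma> (dsp_mult mS mT \<sigma> (a, u) x') (a, u) = (a, u)"
    and "dsp_mult mS mT \<sigma> (dsp_mult mS mT \<sigma> x' (a, u)) x' = x'"
proof -
  show "dsp_mult mS mT \<sigma> (dsp_mult mS mT \<sigma> (a, u) x') (a, u) = (a, u)"
    by (simp add: x'_def dsp_mult_def act_mult act_comp act_act_inv act_idempotent
        inv_of_regular[OF inverse_S] inv_of_regular[OF inverse_T])
  have "mS (mS (\<sigma> w (inv_of mS a)) (\<sigma> w a)) (\<sigma> w (inv_of mS a)) = \<sigma> w (inv_of mS a)" for w
    by (simp flip: act_mult add: inv_of_regular[OF inverse_S])
  then show "dsp_mult mS mT \<sigma> (dsp_mult mS mT \<sigma> x' (a, u)) x' = x'"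
    by (simp add: x'_def dsp_mult_def act_comp act_act_inv inv_of_regular[OF inverse_T])
qed

lemma dsp_mult_inverse_unique:
  assumes "dsp_mult mS mT \<sigma> (dsp_mult mS mT \<sigma> (a, u) (c, w)) (a, u) = (a, u)"
    and "dsp_mult mS mT \<sigma> (dsp_mult mS mT \<sigma> (c, w) (a, u)) (c, w) = (c, w)"
  shows "(c, w) = (\<sigma> (inv_of mT u) (inv_of mS a), inv_of mT u)"
proof -
  have "mT (mT u w) u = u" "mT (mT w u) w = w"
    using assms by (simp_all add: dsp_mult_def)
  then have w: "w = inv_of mT u"
    by (simp add: inv_of_eqI[OF inverse_T])
  have "mS (mS a (\<sigma> u c)) a = a"
    using assms(1) by (simp add: w dsp_mult_def act_mult act_comp act_idempotent act_act_inv)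
  moreover have "mS (mS (\<sigma> u c) a) (\<sigma> u c) = \<sigma> u c"
    using arg_cong[OF assms(2), of "\<lambda>z. \<sigma> u (fst z)"]
    by (simp add: w dsp_mult_def act_mult act_comp act_act_inv)
  ultimately have "inv_of mS a = \<sigma> u c"
    by (rule inv_of_eqI[OF inverse_S])
  then show ?thesis
    by (simp add: w act_inv_act)
qed

lemma inverse_semigroup_dsp_mult: "inverse_semigroup (dsp_mult mS mT \<sigma>)"
  unfolding inverse_semigroup_def semigroup_op_def
proof (intro conjI allI)
  fix x :: "'a \<times> 'b"
  obtain a u where x: "x = (a, u)"
    by fastforce
  show "\<exists>!y. dsp_mult mS mT \<sigma> (dsp_mult mS mT \<sigma> x y) x = x \<and> dsp_mult mS mT \<sigma> (dsp_mult mS mT \<sigma> y x) y = y"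
    unfolding x
  proof (rule ex1I, intro conjI)
    fix y
    assume "dsp_mult mS mT \<sigma> (dsp_mult mS mT \<sigma> (a, u) y) (a, u) = (a, u) \<and>
      dsp_mult mS mT \<sigma> (dsp_mult mS mT \<sigma> y (a, u)) y = y"
    then show "y = (\<sigma> (inv_of mT u) (inv_of mS a), inv_of mT u)"
      using dsp_mult_inverse_unique by (cases y) blast
  qed (fact dsp_mult_regular)+
qed (rule dsp_mult_assoc)

lemma inv_of_dsp_mult:
  "inv_of (dsp_mult mS mT \<sigma>) (a, u) = (\<sigma> (inv_of mT u) (inv_of mS a), inv_of mT u)"
  using inverse_semigroup_dsp_mult dsp_mult_regular by (rule inv_of_eqI)

end

theorem proposition42:
  fixes addS mS :: "'a \<Rightarrow> 'a \<Rightarrow> 'a"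
    and addT mT :: "'b \<Rightarrow> 'b \<Rightarrow> 'b"
    and \<sigma> :: "'b \<Rightarrow> 'a \<Rightarrow> 'a"
    and \<delta> :: "'a \<Rightarrow> 'b \<Rightarrow> 'b"
  assumes S: "left_inverse_semi_brace addS mS"
    and T: "left_inverse_semi_brace addT mT"
    and sigma_aut: "\<And>u. semi_brace_aut addS mS (\<sigma> u)"
    and sigma_hom: "\<And>u v. \<sigma> (mT u v) = \<sigma> u \<circ> \<sigma> v"
    and delta_end: "\<And>a u v. \<delta> a (addT u v) = addT (\<delta> a u) (\<delta> a v)"
    and delta_anti: "\<And>a b. \<delta> (addS a b) = \<delta> b \<circ> \<delta> a"
    and compat: "\<And>a b u v w.
        addT (\<delta> (lam addS mS a (\<sigma> u b)) (mT u v))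
             (mT u (addT (\<delta> b (inv_of mT u)) w))
        = mT u (addT (\<delta> b v) w)"
  shows "\<And>a u b v.
     (let \<Omega> = addT (\<delta> b (inv_of mT u)) v in
      r_map (dsp_add addS addT \<delta>) (dsp_mult mS mT \<sigma>) (a, u) (b, v) =
        ((lam addS mS a (\<sigma> u b), mT u \<Omega>),
         (\<sigma> (mT (inv_of mT \<Omega>) (inv_of mT u)) (rho addS mS (\<sigma> u b) a),
          mT (inv_of mT \<Omega>) v)))"
proof -
  have act_add: "\<sigma> u (addS x y) = addS (\<sigma> u x) (\<sigma> u y)" for u x y
    using sigma_aut unfolding semi_brace_aut_def by blast
  interpret inverse_semigroup_action mS mT \<sigma>
  proof
    show "inverse_semigroup mS" "inverse_semigroup mT"
      using S T unfolding left_inverse_semi_brace_def by blast+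
  qed (use sigma_aut sigma_hom in \<open>auto simp: semi_brace_aut_def bij_is_inj\<close>)
  have sum_inv_of: "dsp_add addS addT \<delta> (inv_of (dsp_mult mS mT \<sigma>) (a, u)) (b, v)
      = (addS (\<sigma> (inv_of mT u) (inv_of mS a)) b, addT (\<delta> b (inv_of mT u)) v)" for a u b v
    by (simp add: inv_of_dsp_mult dsp_add_def)
  show "?thesis a u b v" for a u b v
    unfolding Let_def r_map_def lam_def rho_def sum_inv_of
    by (simp add: inv_of_dsp_mult dsp_mult_def act_add act_mult act_inv_of act_comp act_act_inv act_inv_act)
qed

end
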